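(* Let $\ell\ge1$ and $V=\prod_{j=\ell,\dots,2,1}(c_1x^jy^jc_2)^2$. If $C$ is an accepting computation of $V$, then $C$ never matches a symbol $x$ with another symbol from the same $x$-block, and never matches a symbol $y$ with another symbol from the same $y$-block.
   Context: Queue automaton: a configuration is written $Q\,\|\,x$ ($Q$ = queue contents, $x$ = remaining input); a step from $Q\,\|\,\sigma x$ ($\sigma$ a symbol) goes either to $Q\sigma\,\|\,x$ (push the input symbol) or, if $Q=\sigma Q'$, to $Q'\,\|\,x$ (the input symbol is matched against the leftmost queue symbol, which is popped; that queue symbol was pushed from an earlier input position and the two occurrences are said to be matched). An accepting computation of $w$ is a computation $\varepsilon\,\|\,w\vdash^*\varepsilon\,\|\,\varepsilon$ ($\varepsilon$ the empty string). Here $c_1,c_2,x,y$ are four distinct symbols. In $V=(c_1x^\ell y^\ell c_2)(c_1x^\ell y^\ell c_2)\cdots(c_1x^1y^1c_2)(c_1x^1y^1c_2)$, each displayed maximal subword $x^j$ is called an $x$-block and each displayed subword $y^j$ a $y$-block. *)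

theory Defs
  imports Main
begin

text \<open>A configuration (Q, i) stands for the configuration
  map (nth w) Q || drop i w
of the paper: Q lists the input positions from which the queue symbols were
pushed (leftmost = front of the queue) and i is the number of input symbols
already read.\<close>

type_synonym qconf = "nat list \<times> nat"

inductive qstep :: "'a list \<Rightarrow> qconf \<Rightarrow> qconf \<Rightarrow> bool" for w where
  push: "i < length w \<Longrightarrow> qstep w (Q, i) (Q @ [i], Suc i)"
| pop:  "i < length w \<Longrightarrow> w ! p = w ! i \<Longrightarrow> qstep w (p # Q, i) (Q, Suc i)"

definition accepting_computation :: "'a list \<Rightarrow> qconf list \<Rightarrow> bool" where
  "accepting_computation w cs \<longleftrightarrow>
     cs \<noteq> [] \<and> hd cs = ([], 0) \<and> last cs = ([], length w) \<and>
     (\<forall>k. Suc k < length cs \<longrightarrow> qstep w (cs ! k) (cs ! Suc k))"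

definition matches :: "qconf list \<Rightarrow> nat \<Rightarrow> nat \<Rightarrow> bool" where
  "matches cs p i \<longleftrightarrow>
     (\<exists>k Q. Suc k < length cs \<and> cs ! k = (p # Q, i) \<and> cs ! Suc k = (Q, Suc i))"

definition same_block :: "'a list \<Rightarrow> 'a \<Rightarrow> nat \<Rightarrow> nat \<Rightarrow> bool" where
  "same_block w a p q \<longleftrightarrow> p < length w \<and> q < length w \<and>
     (\<forall>k. min p q \<le> k \<and> k \<le> max p q \<longrightarrow> w ! k = a)"

definition Vword :: "'a \<Rightarrow> 'a \<Rightarrow> 'a \<Rightarrow> 'a \<Rightarrow> nat \<Rightarrow> 'a list" where
  "Vword c1 c2 x y l =
     concat (map (\<lambda>j. let b = [c1] @ replicate j x @ replicate j y @ [c2] in b @ b)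
                 (rev [1..<Suc l]))"

end

theory Submission
  imports Defs
begin

text \<open>Read c1 as an opening and c2 as a closing bracket: every x or y of V sits at
bracket depth one, so an odd number of brackets precedes it.  On the other hand, every
symbol a occurs an even number of times in the read prefix and the queue together (a
push adds one occurrence to each, a pop adds one to the prefix and removes one from the
queue).  When the computation matches position p with position i, the queue consists of
positions in [p, i); if these all carry the same x or y, the queue holds no brackets,
so the prefix before i contains an even number of each bracket, contradicting depth one.\<close>

lemma accepting_computation_invariant:
  assumes "accepting_computation w cs"
    and "P ([], 0)"
    and "\<And>c c'. qstep w c c' \<Longrightarrow> P c \<Longrightarrow> P c'"
    and "k < length cs"
  shows "P (cs ! k)"
  using assms(4)
proof (induction k)
  case 0
  then show ?case using assms(1,2) by (simp add: accepting_computation_def hd_conv_nth)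
next
  case (Suc k)
  then have "qstep w (cs ! k) (cs ! Suc k)"
    using assms(1) by (simp add: accepting_computation_def)
  with Suc assms(3) show ?case by simp
qed

fun conf_invariant :: "'a list \<Rightarrow> qconf \<Rightarrow> bool" where
  "conf_invariant w (Q, i) \<longleftrightarrow>
     sorted Q \<and> (\<forall>q\<in>set Q. q < i) \<and>
     (\<forall>a. even (count_list (take i w) a + count_list (map ((!) w) Q) a))"

lemma qstep_conf_invariant:
  "qstep w c c' \<Longrightarrow> conf_invariant w c \<Longrightarrow> conf_invariant w c'"
proof (induction rule: qstep.induct)
  case (push i Q)
  then show ?case by (auto simp: sorted_append take_Suc_conv_app_nth less_Suc_eq)
next
  case (pop i p Q)
  then show ?case by (auto simp: take_Suc_conv_app_nth less_Suc_eq)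
qed

lemma accepting_computation_conf_invariant:
  "accepting_computation w cs \<Longrightarrow> k < length cs \<Longrightarrow> conf_invariant w (cs ! k)"
  by (rule accepting_computation_invariant) (auto intro: qstep_conf_invariant)

lemma matched_prefix_count_even:
  assumes "accepting_computation w cs"
    and "matches cs p i"
    and "\<And>q. p \<le> q \<Longrightarrow> q < i \<Longrightarrow> w ! q \<noteq> a"
  shows "even (count_list (take i w) a)"
proof -
  obtain k Q where k: "k < length cs" "cs ! k = (p # Q, i)"
    using assms(2) unfolding matches_def by (blast dest: Suc_lessD)
  have inv: "conf_invariant w (p # Q, i)"
    using accepting_computation_conf_invariant[OF assms(1) k(1)] k(2) by simp
  have "count_list (map ((!) w) (p # Q)) a = 0"
    unfolding count_list_0_iff
  proof
    assume "a \<in> set (map ((!) w) (p # Q))"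
    then obtain q where "q \<in> set (p # Q)" "w ! q = a" by auto
    moreover from this(1) inv have "p \<le> q" "q < i" by auto
    ultimately show False using assms(3) by blast
  qed
  with inv show ?thesis by (metis add_0_right conf_invariant.simps)
qed

definition bracket_depth_one :: "'a \<Rightarrow> 'a \<Rightarrow> 'a list \<Rightarrow> bool" where
  "bracket_depth_one c1 c2 w \<longleftrightarrow>
     count_list w c1 = count_list w c2 \<and>
     (\<forall>i<length w. w ! i \<noteq> c1 \<and> w ! i \<noteq> c2 \<longrightarrow>
        count_list (take i w) c1 = count_list (take i w) c2 + 1)"

lemma bracket_depth_one_append:
  assumes "bracket_depth_one c1 c2 u" "bracket_depth_one c1 c2 v"
  shows "bracket_depth_one c1 c2 (u @ v)"
  unfolding bracket_depth_one_def
proof (intro conjI allI impI)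
  fix i assume i: "i < length (u @ v)" "(u @ v) ! i \<noteq> c1 \<and> (u @ v) ! i \<noteq> c2"
  show "count_list (take i (u @ v)) c1 = count_list (take i (u @ v)) c2 + 1"
    using assms i by (cases "i < length u") (auto simp: bracket_depth_one_def nth_append)
qed (use assms in \<open>simp add: bracket_depth_one_def\<close>)

lemma bracket_depth_one_concat:
  "(\<And>u. u \<in> set us \<Longrightarrow> bracket_depth_one c1 c2 u) \<Longrightarrow> bracket_depth_one c1 c2 (concat us)"
proof (induction us)
  case Nil
  then show ?case by (simp add: bracket_depth_one_def)
next
  case (Cons u us)
  then show ?case by (simp add: bracket_depth_one_append)
qed

lemma bracket_depth_one_enclosed:
  assumes "c1 \<noteq> c2" "c1 \<notin> set m" "c2 \<notin> set m"
  shows "bracket_depth_one c1 c2 (c1 # m @ [c2])"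
  unfolding bracket_depth_one_def
proof (intro conjI allI impI)
  fix i assume i: "i < length (c1 # m @ [c2])"
    "(c1 # m @ [c2]) ! i \<noteq> c1 \<and> (c1 # m @ [c2]) ! i \<noteq> c2"
  then obtain j where j: "i = Suc j" "j < length m"
    by (cases i) (auto simp: nth_append split: if_splits)
  have "c1 \<notin> set (take j m)" "c2 \<notin> set (take j m)"
    using assms in_set_takeD by fastforce+
  with j assms show "count_list (take i (c1 # m @ [c2])) c1 =
      count_list (take i (c1 # m @ [c2])) c2 + 1" by simp
qed (use assms in simp)

lemma bracket_depth_one_Vword:
  assumes "distinct [c1, c2, x, y]"
  shows "bracket_depth_one c1 c2 (Vword c1 c2 x y l)"
  unfolding Vword_def
proof (rule bracket_depth_one_concat, clarsimp simp: Let_def)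
  fix j
  have "bracket_depth_one c1 c2 (c1 # (replicate j x @ replicate j y) @ [c2])"
    using assms by (intro bracket_depth_one_enclosed) auto
  from bracket_depth_one_append[OF this this]
  show "bracket_depth_one c1 c2
      (c1 # replicate j x @ replicate j y @ c2 # c1 # replicate j x @ replicate j y @ [c2])"
    by simp
qed

lemma matched_not_same_block:
  assumes "accepting_computation w cs" "bracket_depth_one c1 c2 w"
    and "z \<noteq> c1" "z \<noteq> c2"
    and "matches cs p i"
  shows "\<not> same_block w z p i"
proof
  assume block: "same_block w z p i"
  then have between: "w ! q = z" if "p \<le> q" "q < i" for q
    using that unfolding same_block_def by auto
  have "even (count_list (take i w) c1)" "even (count_list (take i w) c2)"
    using matched_prefix_count_even[OF assms(1,5)] between assms(3,4) by metis+
  moreover have "count_list (take i w) c1 = count_list (take i w) c2 + 1"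
    using block assms(2-4) unfolding same_block_def bracket_depth_one_def by auto
  ultimately show False by simp
qed

theorem lemma10:
  fixes c1 c2 x y :: 'a and l :: nat and cs :: "qconf list"
  assumes "distinct [c1, c2, x, y]"
    and "l \<ge> 1"
    and "accepting_computation (Vword c1 c2 x y l) cs"
  shows "\<forall>p i. matches cs p i \<longrightarrow>
           \<not> same_block (Vword c1 c2 x y l) x p i \<and>
           \<not> same_block (Vword c1 c2 x y l) y p i"
  using matched_not_same_block[OF assms(3) bracket_depth_one_Vword[OF assms(1)]] assms(1)
  by auto

end
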